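(* (a) There is an absolute constant $c>0$ such that for every event graph $G$ with $n$ nodes and every node $(v,X)$ of the unique sink component $\mathcal C$ of $\mathrm{dec}(G)$, a certifying walk for $(v,X)$ of minimum length has length at most $c n^2$. Consequently, for any two nodes $(u,X),(v,Y)$ of $\mathcal C$ there is a directed walk in $\mathcal C$ from $(u,X)$ to $(v,Y)$ of length at most $c' n^2$ for an absolute constant $c'$, i.e., $\mathcal C$ has diameter $O(n^2)$. (b) Both bounds are tight: for every integer $m\ge 2$, let $P$ be the path with $n=2m+1$ vertices whose labels, in order along the path, are $\mathtt{i}m,\mathtt{i}(m-1),\dots,\mathtt{i}1,\mathtt{d}m,\mathtt{d}1,\mathtt{d}2,\dots,\mathtt{d}m$, let $v$ be its middle vertex (labeled $\mathtt{d}m$), and let $Y=\{2k+1 : k=0,\dots,\lfloor m/2\rfloor-1\}$. Then $(v,\emptyset)$ and $(v,Y)$ are nodes of the unique sink component of $\mathrm{dec}(P)$, every certifying walk for $(v,Y)$ has length $\Omega(n^2)$, and every directed walk in $\mathrm{dec}(P)$ from $(v,\emptyset)$ to $(v,Y)$ has length $\Omega(n^2)$.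
   Context: An event graph is a finite, connected, undirected graph $G=(V,E)$, with $n=|V|$, in which every node $v$ carries a label that is either $\mathtt{i}x_v$ (insertion of $x_v$) or $\mathtt{d}x_v$ (deletion of $x_v$), where $x_v$ is an element of a finite universe $\mathcal U$. Write $\mathcal U_{|V}=\{x_v : v\in V\}$. It is assumed that for each $x\in\mathcal U_{|V}$ at least one node is labeled $\mathtt{i}x$ and at least one node is labeled $\mathtt{d}x$. The decorated graph $\mathrm{dec}(G)$ is the directed graph with vertex set $V\times 2^{\mathcal U_{|V}}$ in which $((u,X),(v,Y))$ is an edge if and only if $\{u,v\}\in E$ and $Y=X\cup\{x_v\}$ when $v$ is labeled $\mathtt{i}x_v$, respectively $Y=X\setminus\{x_v\}$ when $v$ is labeled $\mathtt{d}x_v$. A sink component of $\mathrm{dec}(G)$ is a strongly connected component of $\mathrm{dec}(G)$ from which no edge leads to a different strongly connected component; $\mathrm{dec}(G)$ has exactly one sink component, denoted $\mathcal C$. A walk in a graph is a finite sequence of nodes in which each node is joined by an edge to its successor (nodes may repeat); it is closed if its first and last nodes coincide; its length is its number of nodes. Given $v\in V$ and $X\subseteq\mathcal U_{|V}$, a certifying walk for $(v,X)$ is a closed walk $W$ in $G$ that starts and ends at $v$, contains for every $x\in\mathcal U_{|V}$ at least one node labeled $\mathtt{i}x$ or $\mathtt{d}x$, and satisfies, for every $x\in\mathcal U_{|V}$: $x\in X$ if and only if the last node of $W$ whose label refers to $x$ is labeled $\mathtt{i}x$. (A node $(v,X)$ lies in $\mathcal C$ iff a certifying walk for it exists.) 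*)

theory Defs
  imports Complex_Main
begin

text \<open>Event graphs. Vertices and universe elements are natural numbers.
  A label is a pair (b, x): b = True means insertion of x, b = False deletion of x.\<close>

type_synonym label = "bool \<times> nat"

definition univ :: "nat set \<Rightarrow> (nat \<Rightarrow> label) \<Rightarrow> nat set" where
  "univ V lab = (\<lambda>v. snd (lab v)) ` V"

definition adj :: "nat set set \<Rightarrow> (nat \<times> nat) set" where
  "adj E = {(u, v). {u, v} \<in> E}"

definition event_graph :: "nat set \<Rightarrow> nat set set \<Rightarrow> (nat \<Rightarrow> label) \<Rightarrow> bool" where
  "event_graph V E lab \<longleftrightarrow>
     finite V \<and> V \<noteq> {} \<and>
     E \<subseteq> {{u, v} | u v. u \<in> V \<and> v \<in> V \<and> u \<noteq> v} \<and>
     (\<forall>u\<in>V. \<forall>v\<in>V. (u, v) \<in> (adj E)\<^sup>*) \<and>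
     (\<forall>x\<in>univ V lab. (\<exists>v\<in>V. lab v = (True, x)) \<and> (\<exists>v\<in>V. lab v = (False, x)))"

definition step :: "(nat \<Rightarrow> label) \<Rightarrow> nat \<Rightarrow> nat set \<Rightarrow> nat set" where
  "step lab v X = (if fst (lab v) then insert (snd (lab v)) X else X - {snd (lab v)})"

definition dec_nodes :: "nat set \<Rightarrow> (nat \<Rightarrow> label) \<Rightarrow> (nat \<times> nat set) set" where
  "dec_nodes V lab = V \<times> Pow (univ V lab)"

definition dec_edges :: "nat set \<Rightarrow> nat set set \<Rightarrow> (nat \<Rightarrow> label) \<Rightarrow> ((nat \<times> nat set) \<times> (nat \<times> nat set)) set" where
  "dec_edges V E lab =
     {((u, X), (v, Y)). (u, X) \<in> dec_nodes V lab \<and> (v, Y) \<in> dec_nodes V lab \<and>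
                        {u, v} \<in> E \<and> Y = step lab v X}"

definition is_scc :: "nat set \<Rightarrow> nat set set \<Rightarrow> (nat \<Rightarrow> label) \<Rightarrow> (nat \<times> nat set) set \<Rightarrow> bool" where
  "is_scc V E lab C \<longleftrightarrow>
     C \<noteq> {} \<and> C \<subseteq> dec_nodes V lab \<and>
     (\<forall>a\<in>C. \<forall>b\<in>C. (a, b) \<in> (dec_edges V E lab)\<^sup>*) \<and>
     (\<forall>a\<in>C. \<forall>b. (a, b) \<in> (dec_edges V E lab)\<^sup>* \<and> (b, a) \<in> (dec_edges V E lab)\<^sup>* \<longrightarrow> b \<in> C)"

definition is_sink_component :: "nat set \<Rightarrow> nat set set \<Rightarrow> (nat \<Rightarrow> label) \<Rightarrow> (nat \<times> nat set) set \<Rightarrow> bool" where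
  "is_sink_component V E lab C \<longleftrightarrow>
     is_scc V E lab C \<and> (\<forall>a\<in>C. \<forall>b. (a, b) \<in> dec_edges V E lab \<longrightarrow> b \<in> C)"

text \<open>Walks are nonempty lists of nodes; their length is the number of nodes.\<close>

definition is_walk :: "nat set \<Rightarrow> nat set set \<Rightarrow> nat list \<Rightarrow> bool" where
  "is_walk V E W \<longleftrightarrow> W \<noteq> [] \<and> set W \<subseteq> V \<and>
     (\<forall>i. Suc i < length W \<longrightarrow> {W ! i, W ! Suc i} \<in> E)"

definition is_dwalk :: "('a \<times> 'a) set \<Rightarrow> 'a list \<Rightarrow> bool" where
  "is_dwalk R W \<longleftrightarrow> W \<noteq> [] \<and> (\<forall>i. Suc i < length W \<longrightarrow> (W ! i, W ! Suc i) \<in> R)"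

definition certifying_walk ::
  "nat set \<Rightarrow> nat set set \<Rightarrow> (nat \<Rightarrow> label) \<Rightarrow> nat \<Rightarrow> nat set \<Rightarrow> nat list \<Rightarrow> bool" where
  "certifying_walk V E lab v X W \<longleftrightarrow>
     is_walk V E W \<and> hd W = v \<and> last W = v \<and>
     (\<forall>x\<in>univ V lab. \<exists>w\<in>set W. snd (lab w) = x) \<and>
     (\<forall>x\<in>univ V lab. x \<in> X \<longleftrightarrow> fst (lab (last (filter (\<lambda>w. snd (lab w) = x) W))))"

text \<open>The tightness example: path 0 - 1 - ... - 2m, labels
  i m, i (m-1), ..., i 1, d m, d 1, ..., d m; middle vertex m.\<close>

definition pathV :: "nat \<Rightarrow> nat set" where
  "pathV m = {0..2*m}"

definition pathE :: "nat \<Rightarrow> nat set set" where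
  "pathE m = {{i, Suc i} | i. i < 2*m}"

definition pathLab :: "nat \<Rightarrow> nat \<Rightarrow> label" where
  "pathLab m i = (if i < m then (True, m - i) else if i = m then (False, m) else (False, i - m))"

definition pathY :: "nat \<Rightarrow> nat set" where
  "pathY m = {2*k+1 | k. k < m div 2}"

end

theory Submission
  imports Defs
begin

text \<open>The sink component is exactly the set of certified nodes, those (v, X) that admit a
  certifying walk (certified_is_sink, sink_component_certified).  A walk certifies X precisely when
  it covers the universe and is settled: every node agrees with X or is followed by an agreeing node
  of the same element (certifying_walk_iff).  Settledness survives the removal of detours, which
  shortens every certifying walk to at most 2 n^2 nodes (settled_shorten, certifying_walk_short).
  Lifting a short walk of G followed by a short certifying walk yields directed walks with at most
  3 n^2 nodes between any two nodes of the sink component (sink_diameter_bound).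

  On the labelled path with 2m + 1 nodes, a walk producing Y from the empty set is
  settled for Y, so read backwards it must extend its reach to the left and to the right in
  alternation (left_extension_forced, right_extension_forced).  A potential (travel_ok) charges the
  resulting zig-zag, whose length is quadratic in the reach, and the walk must reach distance about m
  (travel_bound, path_dwalk_lower_bound).  Certifying walks for (m, Y) lift to such directed walks,
  and explicit alternating excursions show that (m, {}) and (m, Y) lie in the sink component.\<close>

text \<open>The recursive
  definitions give convenient induction principles; they agree with the index-based notions of Defs.\<close>

fun linked :: "nat set set \<Rightarrow> nat list \<Rightarrow> bool" where
  "linked E [] = True"
| "linked E [x] = True"
| "linked E (x # y # xs) = ({x, y} \<in> E \<and> linked E (y # xs))"

fun chained :: "('a \<times> 'a) set \<Rightarrow> 'a list \<Rightarrow> bool" where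
  "chained R [] = True"
| "chained R [x] = True"
| "chained R (x # y # xs) = ((x, y) \<in> R \<and> chained R (y # xs))"

lemma linked_iff_nth: "linked E W \<longleftrightarrow> (\<forall>i. Suc i < length W \<longrightarrow> {W ! i, W ! Suc i} \<in> E)"
proof (induction E W rule: linked.induct)
  case (3 E x y xs)
  then show ?case by (auto simp: nth_Cons split: nat.splits)
qed auto

lemma chained_iff_nth: "chained R W \<longleftrightarrow> (\<forall>i. Suc i < length W \<longrightarrow> (W ! i, W ! Suc i) \<in> R)"
proof (induction R W rule: chained.induct)
  case (3 R x y xs)
  then show ?case by (auto simp: nth_Cons split: nat.splits)
qed auto

lemma is_walk_iff: "is_walk V E W \<longleftrightarrow> W \<noteq> [] \<and> set W \<subseteq> V \<and> linked E W"
  by (simp add: is_walk_def linked_iff_nth)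

lemma is_dwalk_iff: "is_dwalk R W \<longleftrightarrow> W \<noteq> [] \<and> chained R W"
  by (simp add: is_dwalk_def chained_iff_nth)

lemma linked_Cons: "L \<noteq> [] \<Longrightarrow> linked E (w # L) \<longleftrightarrow> {w, hd L} \<in> E \<and> linked E L"
  by (cases L) auto

lemma chained_Cons: "L \<noteq> [] \<Longrightarrow> chained R (x # L) \<longleftrightarrow> (x, hd L) \<in> R \<and> chained R L"
  by (cases L) auto

lemma linked_tl: "linked E xs \<Longrightarrow> linked E (tl xs)"
  by (cases "(E, xs)" rule: linked.cases) auto

lemma linked_append_Cons: "linked E (xs @ y # ys) \<longleftrightarrow> linked E (xs @ [y]) \<and> linked E (y # ys)"
proof (induction xs)
  case (Cons x xs)
  then show ?case by (cases xs) auto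
qed simp

lemma linked_glue:
  assumes "linked E A" "linked E B" "A \<noteq> []" "B \<noteq> []" "last A = hd B"
  shows "linked E (A @ tl B)"
proof -
  have "A @ tl B = butlast A @ last A # tl B"
    using assms(3) by (metis append_butlast_last_id append.assoc append_Cons append_Nil)
  moreover have "linked E (butlast A @ [last A])" using assms(1,3) by simp
  moreover have "linked E (last A # tl B)" using assms by (cases B) auto
  ultimately show ?thesis using linked_append_Cons by metis
qed

lemma linked_append_edge:
  "linked E A \<Longrightarrow> linked E B \<Longrightarrow> A \<noteq> [] \<Longrightarrow> B \<noteq> [] \<Longrightarrow> {last A, hd B} \<in> E \<Longrightarrow> linked E (A @ B)"
  using linked_glue[of E A "last A # B"] by (simp add: linked_Cons)

lemma linked_take: "linked E xs \<Longrightarrow> linked E (take k xs)"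
proof (induction E xs arbitrary: k rule: linked.induct)
  case (3 E x y xs)
  show ?case
  proof (cases k)
    case (Suc j)
    then have "linked E (take j (y # xs))" using 3 by simp
    then show ?thesis using 3 Suc by (cases j) auto
  qed simp
qed (auto simp: take_Cons split: nat.splits)

lemma linked_distinct:
  "linked E Q \<Longrightarrow> Q \<noteq> [] \<Longrightarrow>
   \<exists>Q'. linked E Q' \<and> Q' \<noteq> [] \<and> hd Q' = hd Q \<and> last Q' = last Q \<and> set Q' \<subseteq> set Q \<and> distinct Q'"
proof (induction "length Q" arbitrary: Q rule: less_induct)
  case less
  show ?case
  proof (cases "distinct Q")
    case False
    then obtain xs u ys zs where Q: "Q = xs @ [u] @ ys @ [u] @ zs"
      using not_distinct_decomp by blast
    let ?Q = "xs @ u # zs"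
    have "linked E (xs @ [u])" "linked E (u # zs)"
      using less(2) Q linked_append_Cons[of E xs u "ys @ u # zs"] linked_append_Cons[of E "u # ys" u zs]
      by auto
    then have "linked E ?Q" using linked_append_Cons by blast
    moreover have "length ?Q < length Q" using Q by simp
    ultimately obtain Q' where "linked E Q' \<and> Q' \<noteq> [] \<and> hd Q' = hd ?Q \<and> last Q' = last ?Q
        \<and> set Q' \<subseteq> set ?Q \<and> distinct Q'"
      using less(1)[of ?Q] by blast
    moreover have "hd ?Q = hd Q" "last ?Q = last Q" "set ?Q \<subseteq> set Q"
      using Q by (cases xs; cases zs; auto)+
    ultimately show ?thesis by (metis order_trans)
  qed (use less in blast)
qed

lemma linked_short_prefix:
  assumes "linked E ws" "t \<in> set ws"
  shows "\<exists>Q. linked E Q \<and> Q \<noteq> [] \<and> hd Q = hd ws \<and> last Q = t \<and> set Q \<subseteq> set ws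
             \<and> length Q \<le> card (set ws)"
proof -
  obtain i where i: "i < length ws" "ws ! i = t" using assms(2) by (metis in_set_conv_nth)
  let ?P = "take (Suc i) ws"
  have "linked E ?P" "?P \<noteq> []" using linked_take assms i by auto
  then obtain Q where Q: "linked E Q" "Q \<noteq> []" "hd Q = hd ?P" "last Q = last ?P" "set Q \<subseteq> set ?P"
    "distinct Q"
    using linked_distinct by metis
  have "set Q \<subseteq> set ws" using Q(5) set_take_subset by fastforce
  moreover have "length Q \<le> card (set ws)"
    using Q(6) \<open>set Q \<subseteq> set ws\<close> distinct_card card_mono by (metis List.finite_set)
  moreover have "hd Q = hd ws" using Q(3) by (simp add: hd_take)
  moreover have "last Q = t" using Q(4) i by (simp add: take_Suc_conv_app_nth)
  ultimately show ?thesis using Q by blast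
qed

lemma event_graph_edge: "event_graph V E lab \<Longrightarrow> {a, b} \<in> E \<Longrightarrow> a \<in> V \<and> b \<in> V \<and> a \<noteq> b"
  unfolding event_graph_def by (auto simp: doubleton_eq_iff)

lemma event_graph_finite: "event_graph V E lab \<Longrightarrow> finite V"
  and event_graph_nonempty: "event_graph V E lab \<Longrightarrow> V \<noteq> {}"
  and event_graph_connected: "event_graph V E lab \<Longrightarrow> u \<in> V \<Longrightarrow> v \<in> V \<Longrightarrow> (u, v) \<in> (adj E)\<^sup>*"
  unfolding event_graph_def by auto

lemma univ_mem: "v \<in> V \<Longrightarrow> snd (lab v) \<in> univ V lab"
  by (auto simp: univ_def)

lemma short_walk:
  assumes eg: "event_graph V E lab" and "u \<in> V" "v \<in> V"
  shows "\<exists>P. is_walk V E P \<and> hd P = u \<and> last P = v \<and> length P \<le> card V"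
proof -
  have "\<exists>P. P \<noteq> [] \<and> linked E P \<and> set P \<subseteq> V \<and> hd P = u \<and> last P = v"
    using event_graph_connected[OF eg assms(2,3)]
  proof (induction rule: converse_rtrancl_induct)
    case base
    then show ?case using \<open>v \<in> V\<close> by (intro exI[of _ "[v]"]) auto
  next
    case (step y z)
    then obtain P where P: "P \<noteq> [] \<and> linked E P \<and> set P \<subseteq> V \<and> hd P = z \<and> last P = v" by blast
    have "{y, z} \<in> E" using step(1) by (simp add: adj_def)
    then show ?case using P event_graph_edge[OF eg] by (intro exI[of _ "y # P"]) (auto simp: linked_Cons)
  qed
  then obtain P where P: "P \<noteq> [] \<and> linked E P \<and> set P \<subseteq> V \<and> hd P = u \<and> last P = v" by blast
  then obtain Q where Q: "linked E Q \<and> Q \<noteq> [] \<and> hd Q = u \<and> last Q = v \<and> set Q \<subseteq> set P \<and> distinct Q"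
    using linked_distinct by metis
  have "length Q = card (set Q)" using Q distinct_card by metis
  also have "\<dots> \<le> card V" using Q P card_mono[OF event_graph_finite[OF eg]] by (meson order_trans)
  finally show ?thesis using Q P by (auto simp: is_walk_iff)
qed

text \<open>Every node has a neighbour: the element of its label has an insertion and a deletion node,
  which are distinct, so the connected graph has at least two nodes.\<close>

lemma event_graph_neighbor:
  assumes eg: "event_graph V E lab" and w: "w \<in> V"
  shows "\<exists>w'. {w', w} \<in> E"
proof -
  obtain p q where "p \<in> V" "lab p = (True, snd (lab w))" "q \<in> V" "lab q = (False, snd (lab w))"
    using eg univ_mem[OF w] unfolding event_graph_def by blast
  then obtain z where z: "z \<in> V" "z \<noteq> w" by (metis Pair_inject)
  have "(w, z) \<in> (adj E)\<^sup>*" using event_graph_connected[OF eg w z(1)] .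
  then obtain y where "(w, y) \<in> adj E" using z(2) by (cases rule: converse_rtranclE) auto
  then show ?thesis by (auto simp: adj_def insert_commute)
qed

lemma covering_walk:
  assumes eg: "event_graph V E lab"
  shows "\<exists>W. is_walk V E W \<and> V \<subseteq> set W"
proof -
  have "S \<subseteq> V \<Longrightarrow> \<exists>W. is_walk V E W \<and> S \<subseteq> set W" for S
  proof (induction S rule: infinite_finite_induct)
    case (infinite S)
    then show ?case using event_graph_finite[OF eg] finite_subset by blast
  next
    case empty
    obtain v where "v \<in> V" using event_graph_nonempty[OF eg] by blast
    then show ?case by (intro exI[of _ "[v]"]) (auto simp: is_walk_iff)
  next
    case (insert s S)
    then obtain W where W: "is_walk V E W" "S \<subseteq> set W" by auto
    have "last W \<in> V" using W by (auto simp: is_walk_iff)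
    then obtain P where P: "is_walk V E P" "hd P = last W" "last P = s"
      using short_walk[OF eg] insert by blast
    have "linked E (W @ tl P)" using W P by (intro linked_glue) (auto simp: is_walk_iff)
    moreover have "s \<in> set (W @ tl P)"
      using P W by (cases P; cases "tl P") (auto simp: is_walk_iff)
    moreover have "set (W @ tl P) \<subseteq> V" using W P by (auto simp: is_walk_iff dest: list.set_sel(2))
    ultimately show ?case using W by (intro exI[of _ "W @ tl P"]) (auto simp: is_walk_iff)
  qed
  then show ?thesis by blast
qed

section \<open>How a walk acts on sets\<close>

text \<open>Walking along ws from the set Z produces the set fold (step lab) ws Z.  An element that occurs
  along ws belongs to the result iff its last occurrence is an insertion.\<close>

abbreviation elem :: "(nat \<Rightarrow> label) \<Rightarrow> nat \<Rightarrow> nat" where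
  "elem lab w \<equiv> snd (lab w)"

lemma fold_step_mem:
  "x \<in> fold (step lab) ws Z \<longleftrightarrow>
    (if \<exists>w\<in>set ws. elem lab w = x then fst (lab (last (filter (\<lambda>w. elem lab w = x) ws))) else x \<in> Z)"
proof (induction ws rule: rev_induct)
  case (snoc w ws)
  then show ?case by (cases "elem lab w = x") (auto simp: step_def)
qed simp

lemma step_sub: "v \<in> V \<Longrightarrow> Z \<subseteq> univ V lab \<Longrightarrow> step lab v Z \<subseteq> univ V lab"
  by (auto simp: step_def univ_def)

lemma fold_sub: "set ws \<subseteq> V \<Longrightarrow> Z \<subseteq> univ V lab \<Longrightarrow> fold (step lab) ws Z \<subseteq> univ V lab"
  by (induction ws arbitrary: Z) (auto simp: step_sub)

fun lift :: "(nat \<Rightarrow> label) \<Rightarrow> nat set \<Rightarrow> nat list \<Rightarrow> (nat \<times> nat set) list" where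
  "lift lab Z [] = []"
| "lift lab Z [q] = [(q, Z)]"
| "lift lab Z (q # q' # qs) = (q, Z) # lift lab (step lab q' Z) (q' # qs)"

lemma lift_length: "length (lift lab Z Q) = length Q"
  by (induction lab Z Q rule: lift.induct) auto

lemma lift_hd: "Q \<noteq> [] \<Longrightarrow> hd (lift lab Z Q) = (hd Q, Z)"
  by (cases "(lab, Z, Q)" rule: lift.cases) auto

lemma lift_nonempty: "Q \<noteq> [] \<Longrightarrow> lift lab Z Q \<noteq> []"
  by (cases "(lab, Z, Q)" rule: lift.cases) auto

lemma lift_last: "Q \<noteq> [] \<Longrightarrow> last (lift lab Z Q) = (last Q, fold (step lab) (tl Q) Z)"
  by (induction lab Z Q rule: lift.induct) (auto simp: lift_hd lift_nonempty)

lemma lift_chained: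
  "linked E Q \<Longrightarrow> set Q \<subseteq> V \<Longrightarrow> Z \<subseteq> univ V lab \<Longrightarrow> chained (dec_edges V E lab) (lift lab Z Q)"
proof (induction lab Z Q rule: lift.induct)
  case (3 lab Z q q' qs)
  have "step lab q' Z \<subseteq> univ V lab" using 3 step_sub by auto
  then show ?case
    using 3 by (auto simp: chained_Cons lift_nonempty lift_hd dec_edges_def dec_nodes_def)
qed auto

lemma chained_project:
  "chained (dec_edges V E lab) L \<Longrightarrow> linked E (map fst L) \<and>
   (L \<noteq> [] \<longrightarrow> snd (last L) = fold (step lab) (tl (map fst L)) (snd (hd L)))"
proof (induction L)
  case (Cons x L)
  then show ?case
    by (cases L) (auto simp: dec_edges_def case_prod_beta)
qed simp

lemma chained_rtrancl: "chained R L \<Longrightarrow> L \<noteq> [] \<Longrightarrow> (hd L, last L) \<in> R\<^sup>*"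
  by (induction R L rule: chained.induct) auto

lemma chained_closed:
  "chained R L \<Longrightarrow> L \<noteq> [] \<Longrightarrow> hd L \<in> C \<Longrightarrow> (\<forall>a\<in>C. \<forall>b. (a, b) \<in> R \<longrightarrow> b \<in> C) \<Longrightarrow> set L \<subseteq> C"
  by (induction R L rule: chained.induct) auto

section \<open>Settled sequences\<close>

text \<open>This is the combinatorial core of certifying walks: it is
  preserved by prepending nodes of classes that already occur, and by deleting detours.\<close>

fun settled :: "(nat \<Rightarrow> bool) \<Rightarrow> (nat \<Rightarrow> nat) \<Rightarrow> nat list \<Rightarrow> bool" where
  "settled g e [] = True"
| "settled g e (w # ws) = (settled g e ws \<and> (g w \<or> (\<exists>u\<in>set ws. e u = e w \<and> g u)))"

lemma settled_good: "settled g e xs \<Longrightarrow> u \<in> set xs \<Longrightarrow> \<exists>u'\<in>set xs. e u' = e u \<and> g u'"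
  by (induction xs) auto

lemma settled_prefix:
  "settled g e xs \<Longrightarrow> \<forall>y\<in>set ys. \<exists>u\<in>set xs. e u = e y \<Longrightarrow> settled g e (ys @ xs)"
proof (induction ys)
  case (Cons y ys)
  then obtain u where "u \<in> set xs" "e u = e y" by auto
  then obtain u' where "u' \<in> set xs" "e u' = e y" "g u'" using settled_good[OF Cons(2)] by metis
  then show ?case using Cons by auto
qed simp

lemma settled_last:
  "settled g e xs \<Longrightarrow> filter (\<lambda>w. e w = x) xs \<noteq> [] \<Longrightarrow> g (last (filter (\<lambda>w. e w = x) xs))"
proof (induction xs)
  case (Cons w ws)
  show ?case
  proof (cases "filter (\<lambda>w. e w = x) ws = []")
    case True
    then have "e w = x" using Cons(3) by (auto split: if_splits)
    moreover have "\<not> (\<exists>u\<in>set ws. e u = e w)" using True \<open>e w = x\<close> by (auto simp: filter_empty_conv)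
    ultimately show ?thesis using Cons True by auto
  qed (use Cons in auto)
qed simp

lemma last_settled: "\<forall>w\<in>set xs. g (last (filter (\<lambda>u. e u = e w) xs)) \<Longrightarrow> settled g e xs"
proof (induction xs)
  case (Cons w ws)
  have "last (filter (\<lambda>u. e u = e w') (w # ws)) = last (filter (\<lambda>u. e u = e w') ws)"
    if "w' \<in> set ws" for w'
    using that by (auto simp: filter_empty_conv)
  then have "settled g e ws" using Cons by simp
  moreover have "g w \<or> (\<exists>u\<in>set ws. e u = e w \<and> g u)"
  proof (cases "filter (\<lambda>u. e u = e w) ws = []")
    case False
    let ?u = "last (filter (\<lambda>u. e u = e w) ws)"
    have "?u \<in> set (filter (\<lambda>u. e u = e w) ws)" using False last_in_set by blast
    moreover have "g ?u" using Cons(2) False by auto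
    ultimately show ?thesis by auto
  qed (use Cons(2) in auto)
  ultimately show ?case by simp
qed simp

lemma settled_iff_last: "settled g e xs \<longleftrightarrow> (\<forall>w\<in>set xs. g (last (filter (\<lambda>u. e u = e w) xs)))"
  using settled_last[of g e xs] last_settled[of xs g e] by (auto simp: filter_empty_conv)

section \<open>Certifying walks\<close>

definition agrees :: "(nat \<Rightarrow> label) \<Rightarrow> nat set \<Rightarrow> nat \<Rightarrow> bool" where
  "agrees lab X w \<longleftrightarrow> (elem lab w \<in> X \<longleftrightarrow> fst (lab w))"

lemma last_filter_in:
  "\<exists>w\<in>set ws. e w = x \<Longrightarrow> last (filter (\<lambda>w. e w = x) ws) \<in> set ws \<and> e (last (filter (\<lambda>w. e w = x) ws)) = x"
proof -
  assume "\<exists>w\<in>set ws. e w = x"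
  then have "filter (\<lambda>w. e w = x) ws \<noteq> []" by (auto simp: filter_empty_conv)
  then show ?thesis using last_in_set[of "filter (\<lambda>w. e w = x) ws"] by auto
qed

lemma certifying_walk_iff:
  "certifying_walk V E lab v X W \<longleftrightarrow>
     is_walk V E W \<and> hd W = v \<and> last W = v \<and> univ V lab \<subseteq> elem lab ` set W \<and>
     settled (agrees lab X) (elem lab) W"
proof -
  define lst where "lst x = last (filter (\<lambda>w. elem lab w = x) W)" for x
  have "(\<forall>x\<in>univ V lab. x \<in> X \<longleftrightarrow> fst (lab (lst x))) \<longleftrightarrow> (\<forall>w\<in>set W. agrees lab X (lst (elem lab w)))"
    if W: "set W \<subseteq> V" "univ V lab \<subseteq> elem lab ` set W"
  proof
    assume H: "\<forall>x\<in>univ V lab. x \<in> X \<longleftrightarrow> fst (lab (lst x))"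
    show "\<forall>w\<in>set W. agrees lab X (lst (elem lab w))"
    proof
      fix w assume w: "w \<in> set W"
      have "elem lab w \<in> univ V lab" using W(1) w univ_mem by blast
      moreover have "elem lab (lst (elem lab w)) = elem lab w"
        using w last_filter_in[of W "elem lab" "elem lab w"] unfolding lst_def by blast
      ultimately show "agrees lab X (lst (elem lab w))" using H by (simp add: agrees_def)
    qed
  next
    assume agr: "\<forall>w\<in>set W. agrees lab X (lst (elem lab w))"
    show "\<forall>x\<in>univ V lab. x \<in> X \<longleftrightarrow> fst (lab (lst x))"
    proof
      fix x assume "x \<in> univ V lab"
      then obtain w where w: "w \<in> set W" "elem lab w = x" using W(2) by blast
      then have "elem lab (lst x) = x"
        using last_filter_in[of W "elem lab" x] unfolding lst_def by blast
      then show "x \<in> X \<longleftrightarrow> fst (lab (lst x))" using agr w unfolding agrees_def by metis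
    qed
  qed
  moreover have "(\<forall>x\<in>univ V lab. \<exists>w\<in>set W. elem lab w = x) \<longleftrightarrow> univ V lab \<subseteq> elem lab ` set W"
    by auto
  ultimately show ?thesis
    unfolding certifying_walk_def settled_iff_last is_walk_def lst_def by blast
qed

lemma certifying_walk_props:
  assumes "certifying_walk V E lab v X W"
  shows "W \<noteq> []" "set W \<subseteq> V" "linked E W" "hd W = v" "last W = v"
    "univ V lab \<subseteq> elem lab ` set W" "settled (agrees lab X) (elem lab) W"
  using assms unfolding certifying_walk_iff is_walk_iff by auto

lemma fold_settled:
  assumes "set ws \<subseteq> V" "univ V lab \<subseteq> elem lab ` set ws" "settled (agrees lab X) (elem lab) ws"
    and "X \<subseteq> univ V lab" "Z \<subseteq> univ V lab"
  shows "fold (step lab) ws Z = X"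
proof (rule set_eqI)
  fix x
  show "x \<in> fold (step lab) ws Z \<longleftrightarrow> x \<in> X"
  proof (cases "x \<in> univ V lab")
    case True
    then have ex: "\<exists>w\<in>set ws. elem lab w = x" using assms(2) by auto
    then have "filter (\<lambda>w. elem lab w = x) ws \<noteq> []" by (auto simp: filter_empty_conv)
    then have "agrees lab X (last (filter (\<lambda>w. elem lab w = x) ws))"
      using settled_last assms(3) by metis
    then show ?thesis using ex last_filter_in[OF ex] by (simp add: fold_step_mem agrees_def)
  next
    case False
    then have "\<not> (\<exists>w\<in>set ws. elem lab w = x)" using assms(1) univ_mem by blast
    then show ?thesis using False assms(4,5) by (auto simp: fold_step_mem)
  qed
qed

lemma settled_fold: "settled (agrees lab (fold (step lab) ws Z)) (elem lab) ws"
  unfolding settled_iff_last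
proof
  fix w assume "w \<in> set ws"
  then have ex: "\<exists>u\<in>set ws. elem lab u = elem lab w" by blast
  then show "agrees lab (fold (step lab) ws Z) (last (filter (\<lambda>u. elem lab u = elem lab w) ws))"
    using last_filter_in[OF ex] by (simp add: agrees_def fold_step_mem)
qed

lemma certifying_walk_fold:
  "certifying_walk V E lab v X W \<Longrightarrow> X \<subseteq> univ V lab \<Longrightarrow> Z \<subseteq> univ V lab \<Longrightarrow> fold (step lab) W Z = X"
  using fold_settled certifying_walk_props by metis

lemma certifying_walk_fold_tl:
  assumes c: "certifying_walk V E lab v X W" and t: "tl W \<noteq> []"
    and "X \<subseteq> univ V lab" "Z \<subseteq> univ V lab"
  shows "fold (step lab) (tl W) Z = X"
proof -
  note cw = certifying_walk_props[OF c]
  obtain w0 ws where W: "W = w0 # ws" using cw(1) by (cases W) auto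
  have "last ws = w0" using cw(4,5) W t by simp
  then have "set ws = set W" using W t by (auto dest: last_in_set)
  moreover have "settled (agrees lab X) (elem lab) ws" using cw(7) W by simp
  ultimately show ?thesis using fold_settled[of ws V lab X Z] cw(2,6) assms(3,4) W by simp
qed

text \<open>From any node of dec(G) there is a directed walk to a node (w, Y) certified by W: walk in G
  to a neighbour of w and then follow W.  Its length is at most n plus the length of W.\<close>

lemma lift_to_certified:
  assumes eg: "event_graph V E lab" and u: "u \<in> V" and Z: "Z \<subseteq> univ V lab"
    and c: "certifying_walk V E lab w Y W" and Y: "Y \<subseteq> univ V lab"
  shows "\<exists>L. is_dwalk (dec_edges V E lab) L \<and> hd L = (u, Z) \<and> last L = (w, Y) \<and>
             length L \<le> card V + length W"
proof -
  note cw = certifying_walk_props[OF c]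
  have w: "w \<in> V" using cw by auto
  obtain w' where w': "{w', w} \<in> E" using event_graph_neighbor[OF eg w] by blast
  then obtain P where P: "is_walk V E P" "hd P = u" "last P = w'" "length P \<le> card V"
    using short_walk[OF eg u] event_graph_edge[OF eg] by blast
  let ?Q = "P @ W"
  have Q: "linked E ?Q" "set ?Q \<subseteq> V" "?Q \<noteq> []"
    using P cw w' by (auto simp: is_walk_iff intro: linked_append_edge)
  let ?L = "lift lab Z ?Q"
  have "fold (step lab) (tl ?Q) Z = fold (step lab) W (fold (step lab) (tl P) Z)"
    using P by (simp add: is_walk_iff)
  also have "\<dots> = Y"
    using certifying_walk_fold[OF c Y] fold_sub[of "tl P" V Z lab] P Z
    by (auto simp: is_walk_iff dest: list.set_sel(2))
  finally have "last ?L = (w, Y)" using lift_last[OF Q(3)] cw by simp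
  moreover have "is_dwalk (dec_edges V E lab) ?L"
    using lift_chained[OF Q(1,2) Z] lift_nonempty[OF Q(3)] by (simp add: is_dwalk_iff)
  moreover have "hd ?L = (u, Z)" using lift_hd[OF Q(3)] P by (simp add: is_walk_iff)
  moreover have "length ?L \<le> card V + length W" using P(4) by (simp add: lift_length)
  ultimately show ?thesis by blast
qed

lemma walk_to_node:
  assumes eg: "event_graph V E lab" and u: "u \<in> V" and Z: "Z \<subseteq> univ V lab" and v: "v \<in> V"
  shows "\<exists>Z'. ((u, Z), (v, Z')) \<in> (dec_edges V E lab)\<^sup>* \<and> Z' \<subseteq> univ V lab"
proof -
  obtain P where P: "is_walk V E P" "hd P = u" "last P = v" using short_walk[OF eg u v] by blast
  have P': "P \<noteq> []" "set P \<subseteq> V" "linked E P" using P by (auto simp: is_walk_iff)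
  have "(hd (lift lab Z P), last (lift lab Z P)) \<in> (dec_edges V E lab)\<^sup>*"
    using chained_rtrancl lift_chained[OF P'(3,2) Z] lift_nonempty[OF P'(1)] by blast
  moreover have "fold (step lab) (tl P) Z \<subseteq> univ V lab"
    using fold_sub P'(1,2) Z by (metis list.set_sel(2) subsetD subsetI)
  moreover have "hd (lift lab Z P) = (u, Z)" "last (lift lab Z P) = (v, fold (step lab) (tl P) Z)"
    using lift_hd[OF P'(1)] lift_last[OF P'(1)] P(2,3) by simp_all
  ultimately show ?thesis by (intro exI[of _ "fold (step lab) (tl P) Z"]) simp
qed

lemma certifying_walk_extend:
  assumes eg: "event_graph V E lab" and e: "((u, X), (w, Y)) \<in> dec_edges V E lab"
    and c: "certifying_walk V E lab u X W"
  shows "certifying_walk V E lab w Y (w # W @ [w])"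
proof -
  note cw = certifying_walk_props[OF c]
  have uw: "{u, w} \<in> E" and Y: "Y = step lab w X" using e by (auto simp: dec_edges_def)
  have w: "w \<in> V" using event_graph_edge[OF eg uw] by blast
  have "linked E (W @ [w])" using linked_append_edge[of E W "[w]"] cw uw by simp
  then have "linked E (w # W @ [w])" using cw uw by (subst linked_Cons) (auto simp: insert_commute)
  moreover have "set (w # W @ [w]) \<subseteq> V" using w cw by auto
  moreover have "\<forall>x\<in>univ V lab. \<exists>w'\<in>set (w # W @ [w]). elem lab w' = x"
    using cw(6) by fastforce
  moreover have "x \<in> Y \<longleftrightarrow> fst (lab (last (filter (\<lambda>w'. elem lab w' = x) (w # W @ [w]))))"
    if x: "x \<in> univ V lab" for x
  proof (cases "elem lab w = x")
    case True then show ?thesis using Y by (auto simp: step_def)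
  next
    case False
    then show ?thesis using Y c x unfolding certifying_walk_def by (auto simp: step_def)
  qed
  ultimately show ?thesis unfolding certifying_walk_def is_walk_iff by simp
qed

definition certified :: "nat set \<Rightarrow> nat set set \<Rightarrow> (nat \<Rightarrow> label) \<Rightarrow> (nat \<times> nat set) set" where
  "certified V E lab = {(v, X). (v, X) \<in> dec_nodes V lab \<and> (\<exists>W. certifying_walk V E lab v X W)}"

lemma certified_reachable:
  assumes eg: "event_graph V E lab" and a: "a \<in> dec_nodes V lab" and b: "b \<in> certified V E lab"
  shows "(a, b) \<in> (dec_edges V E lab)\<^sup>*"
proof -
  obtain u Z w Y W where "a = (u, Z)" "b = (w, Y)" "u \<in> V" "Z \<subseteq> univ V lab" "Y \<subseteq> univ V lab"
    "certifying_walk V E lab w Y W"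
    using a b by (auto simp: certified_def dec_nodes_def)
  then show ?thesis
    using lift_to_certified[OF eg] chained_rtrancl by (metis is_dwalk_iff)
qed

text \<open>Walking through a covering walk and back to its start gives a certifying walk for the
  resulting set, so certified nodes exist.\<close>

lemma certified_nonempty:
  assumes eg: "event_graph V E lab"
  shows "certified V E lab \<noteq> {}"
proof -
  obtain W where W: "is_walk V E W" "V \<subseteq> set W" using covering_walk[OF eg] by blast
  have "last W \<in> V" "hd W \<in> V" using W by (auto simp: is_walk_iff)
  then obtain P where P: "is_walk V E P" "hd P = last W" "last P = hd W"
    using short_walk[OF eg] by blast
  let ?W = "W @ tl P"
  let ?X = "fold (step lab) ?W {}"
  have walk: "is_walk V E ?W"
    using W P linked_glue[of E W P] by (auto simp: is_walk_iff dest: list.set_sel(2))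
  have "hd ?W = hd W" using W by (simp add: is_walk_iff)
  moreover have "last ?W = hd W" using P W by (cases P; cases "tl P") (auto simp: is_walk_iff)
  moreover have "univ V lab \<subseteq> elem lab ` set ?W" using W(2) by (auto simp: univ_def)
  ultimately have "certifying_walk V E lab (hd W) ?X ?W"
    unfolding certifying_walk_iff using walk settled_fold by blast
  moreover have "?X \<subseteq> univ V lab" using fold_sub walk by (auto simp: is_walk_iff)
  ultimately show ?thesis using \<open>hd W \<in> V\<close> by (auto simp: certified_def dec_nodes_def)
qed

lemma certified_closed:
  assumes eg: "event_graph V E lab" and r: "(a, b) \<in> (dec_edges V E lab)\<^sup>*" and a: "a \<in> certified V E lab"
  shows "b \<in> certified V E lab"
  using r a
proof (induction rule: rtrancl_induct)
  case (step y z)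
  then show ?case
    using certifying_walk_extend[OF eg]
    by (auto simp: certified_def dec_edges_def) blast
qed

theorem certified_is_sink:
  assumes eg: "event_graph V E lab"
  shows "is_sink_component V E lab (certified V E lab)"
proof -
  have "certified V E lab \<subseteq> dec_nodes V lab" by (auto simp: certified_def)
  then show ?thesis
    unfolding is_sink_component_def is_scc_def
    using certified_nonempty[OF eg] certified_reachable[OF eg] certified_closed[OF eg] by blast
qed

lemma sink_component_certified:
  assumes eg: "event_graph V E lab" and C: "is_sink_component V E lab C" and a: "a \<in> C"
  shows "a \<in> certified V E lab"
proof -
  have closed: "b \<in> C" if "(a, b) \<in> (dec_edges V E lab)\<^sup>*" for b
    using that C by (induction rule: rtrancl_induct) (auto simp: is_sink_component_def a)
  obtain b where b: "b \<in> certified V E lab" using certified_nonempty[OF eg] by blast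
  have "a \<in> dec_nodes V lab" using a C by (auto simp: is_sink_component_def is_scc_def)
  then have "b \<in> C" using closed certified_reachable[OF eg _ b] by blast
  then have "(b, a) \<in> (dec_edges V E lab)\<^sup>*" using a C by (auto simp: is_sink_component_def is_scc_def)
  then show ?thesis using certified_closed[OF eg _ b] by blast
qed

section \<open>Short certifying walks\<close>

text \<open>Cutting detours: a settled walk W can be replaced by a settled walk with the same node set
  and the same last node of length at most |set W|^2.  Going backwards, each new node is joined
  to the (recursively shortened) rest by a repetition-free walk of at most |set W| nodes.\<close>

lemma settled_shorten:
  "linked E W \<Longrightarrow> W \<noteq> [] \<Longrightarrow> settled g e W \<Longrightarrow>
   \<exists>W'. linked E W' \<and> W' \<noteq> [] \<and> settled g e W' \<and> set W' = set W \<and> last W' = last W \<and>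
        length W' \<le> card (set W) ^ 2"
proof (induction W)
  case (Cons w ws)
  show ?case
  proof (cases "ws = []")
    case True
    then show ?thesis using Cons.prems by (intro exI[of _ "[w]"]) auto
  next
    case False
    have ws: "linked E ws" "{w, hd ws} \<in> E" "settled g e ws"
      using Cons.prems False linked_Cons by auto
    obtain ws' where ws': "linked E ws'" "ws' \<noteq> []" "settled g e ws'" "set ws' = set ws"
      "last ws' = last ws" "length ws' \<le> card (set ws) ^ 2"
      using Cons.IH[OF ws(1) False ws(3)] by blast
    show ?thesis
    proof (cases "w \<in> set ws")
      case True
      then show ?thesis using ws' False by (intro exI[of _ ws']) (auto simp: insert_absorb)
    next
      case new: False
      obtain Q where Q: "linked E Q" "Q \<noteq> []" "hd Q = hd ws" "last Q = hd ws'" "set Q \<subseteq> set ws"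
        "length Q \<le> card (set ws)"
        using linked_short_prefix[OF ws(1)] ws'(2,4) hd_in_set by metis
      let ?R = "butlast Q @ ws'"
      have R: "Q @ tl ws' = ?R"
        using Q(2,4) ws'(2) by (metis append_butlast_last_id append_Cons append_assoc append_Nil list.collapse)
      have "linked E ?R" using linked_glue[OF Q(1) ws'(1) Q(2) ws'(2) Q(4)] R by simp
      moreover have "hd ?R = hd ws" using Q(2,3) R by (metis hd_append2)
      ultimately have "linked E (w # ?R)" using ws(2) ws'(2) by (subst linked_Cons) auto
      moreover have "settled g e ?R"
        using settled_prefix[OF ws'(3)] Q(5) ws'(4) by (auto dest: in_set_butlastD)
      then have "settled g e (w # ?R)"
        using Cons.prems(3) ws'(4) by auto
      moreover have "set (w # ?R) = set (w # ws)" using Q(5) ws'(4) by (auto dest: in_set_butlastD)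
      moreover have "last (w # ?R) = last (w # ws)" using ws' False by simp
      moreover have "length (w # ?R) \<le> card (set (w # ws)) ^ 2"
      proof -
        have "length (w # ?R) \<le> 1 + card (set ws) + card (set ws) ^ 2" using Q(6) ws'(6) by simp
        also have "\<dots> \<le> (card (set ws) + 1) ^ 2" by (simp add: power2_eq_square)
        finally show ?thesis using new by simp
      qed
      ultimately show ?thesis by blast
    qed
  qed
qed simp

text \<open>Every certifying walk can be replaced by one with at most 2 n^2 nodes: shorten it, then
  return to the start v along a walk with at most n nodes.  The prefix only adds nodes of
  elements already covered, so the walk stays settled.\<close>

lemma certifying_walk_short:
  assumes eg: "event_graph V E lab" and c: "certifying_walk V E lab v X W"
  shows "\<exists>W'. certifying_walk V E lab v X W' \<and> length W' \<le> 2 * card V ^ 2"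
proof -
  note cw = certifying_walk_props[OF c]
  obtain W1 where W1: "linked E W1" "W1 \<noteq> []" "settled (agrees lab X) (elem lab) W1"
    "set W1 = set W" "last W1 = v" "length W1 \<le> card (set W) ^ 2"
    using settled_shorten[OF cw(3,1,7)] cw(5) by metis
  have "card (set W) \<le> card V" using cw(2) card_mono event_graph_finite[OF eg] by blast
  then have len1: "length W1 \<le> card V ^ 2" using W1(6) by (meson le_trans power_mono zero_le)
  have "v \<in> V" "hd W1 \<in> V" using cw W1 hd_in_set by (metis subsetD)+
  then obtain P where P: "is_walk V E P" "hd P = v" "last P = hd W1" "length P \<le> card V"
    using short_walk[OF eg] by blast
  let ?W = "butlast P @ W1"
  have P': "P \<noteq> []" "set P \<subseteq> V" "linked E P" using P(1) by (auto simp: is_walk_iff)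
  have eqW: "P @ tl W1 = ?W"
    using P'(1) W1(2) P(3) by (metis append_butlast_last_id append_Cons append_assoc append_Nil list.collapse)
  have "is_walk V E ?W"
    using linked_glue[OF P'(3) W1(1) P'(1) W1(2) P(3)] eqW P'(2) W1(2,4) cw(2)
    by (auto simp: is_walk_iff dest: in_set_butlastD)
  moreover have "hd ?W = v" using eqW[symmetric] P(2) P'(1) by simp
  moreover have "last ?W = v" using W1(2,5) by simp
  moreover have "univ V lab \<subseteq> elem lab ` set ?W" using cw(6) W1(4) by auto
  moreover have "settled (agrees lab X) (elem lab) ?W"
  proof (rule settled_prefix[OF W1(3)], rule ballI)
    fix y assume "y \<in> set (butlast P)"
    then have "elem lab y \<in> univ V lab" using P'(2) univ_mem by (metis in_set_butlastD subsetD)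
    then show "\<exists>u\<in>set W1. elem lab u = elem lab y" using cw(6) W1(4) by force
  qed
  moreover have "length ?W \<le> 2 * card V ^ 2"
    using P(4) len1 by (simp add: power2_eq_square) (metis add_le_mono le_square le_trans length_butlast diff_le_self mult_2)
  ultimately show ?thesis unfolding certifying_walk_iff by blast
qed

lemma sink_certifying_walk_bound:
  assumes eg: "event_graph V E lab" and C: "is_sink_component V E lab C" and vX: "(v, X) \<in> C"
  shows "\<exists>W. certifying_walk V E lab v X W \<and> length W \<le> 2 * card V ^ 2"
  using sink_component_certified[OF eg C vX] certifying_walk_short[OF eg]
  by (auto simp: certified_def)

text \<open>Any two nodes a, b of the sink component are joined inside it by a directed walk with at
  most 3 n^2 nodes: lift a short walk of G followed by a short certifying walk for b.\<close>

lemma sink_diameter_bound: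
  assumes eg: "event_graph V E lab" and C: "is_sink_component V E lab C" and a: "a \<in> C" and b: "b \<in> C"
  shows "\<exists>L. is_dwalk (dec_edges V E lab) L \<and> set L \<subseteq> C \<and> hd L = a \<and> last L = b \<and>
             length L \<le> 3 * card V ^ 2"
proof -
  obtain u Z w Y where ab: "a = (u, Z)" "b = (w, Y)" by force
  have "C \<subseteq> dec_nodes V lab" using C unfolding is_sink_component_def is_scc_def by blast
  then have u: "u \<in> V" "Z \<subseteq> univ V lab" "Y \<subseteq> univ V lab" using a b ab by (auto simp: dec_nodes_def)
  obtain W where c: "certifying_walk V E lab w Y W" and lenW: "length W \<le> 2 * card V ^ 2"
    using sink_certifying_walk_bound[OF eg C] b ab by blast
  obtain L where L: "is_dwalk (dec_edges V E lab) L" "hd L = a" "last L = b" "length L \<le> card V + length W"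
    using lift_to_certified[OF eg u(1,2) c u(3)] ab by blast
  have "set L \<subseteq> C"
    using chained_closed[of _ L C] L(1,2) a C unfolding is_dwalk_iff is_sink_component_def by blast
  moreover have "length L \<le> 3 * card V ^ 2"
    using L(4) lenW le_square[of "card V"] by (simp only: power2_eq_square)
  ultimately show ?thesis using L by blast
qed

section \<open>The tight example: a labelled path\<close>

lemma lab_left: "p < m \<Longrightarrow> pathLab m p = (True, m - p)" by (simp add: pathLab_def)
lemma lab_mid: "pathLab m m = (False, m)" by (simp add: pathLab_def)
lemma lab_right: "m < p \<Longrightarrow> pathLab m p = (False, p - m)" by (simp add: pathLab_def)

lemma path_edge: "{a, b} \<in> pathE m \<Longrightarrow> (b = Suc a \<and> Suc a \<le> 2*m) \<or> (a = Suc b \<and> Suc b \<le> 2*m)"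
  by (auto simp: pathE_def doubleton_eq_iff)

lemma path_edge_intro: "i < 2*m \<Longrightarrow> {i, Suc i} \<in> pathE m" "i < 2*m \<Longrightarrow> {Suc i, i} \<in> pathE m"
  by (auto simp: pathE_def insert_commute)

lemma path_univ: "1 \<le> m \<Longrightarrow> univ (pathV m) (pathLab m) = {1..m}"
proof (rule set_eqI)
  fix x assume m: "1 \<le> m"
  show "x \<in> univ (pathV m) (pathLab m) \<longleftrightarrow> x \<in> {1..m}"
  proof
    assume "x \<in> univ (pathV m) (pathLab m)"
    then obtain p where "p \<le> 2*m" "x = snd (pathLab m p)" by (auto simp: univ_def pathV_def)
    then show "x \<in> {1..m}" using m by (auto simp: pathLab_def)
  next
    assume "x \<in> {1..m}"
    then have "m + x \<in> pathV m" "snd (pathLab m (m + x)) = x" by (auto simp: pathV_def pathLab_def)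
    then show "x \<in> univ (pathV m) (pathLab m)" unfolding univ_def by force
  qed
qed

lemma path_connected: "k + i \<le> 2*m \<Longrightarrow> (i, i + k) \<in> (adj (pathE m))\<^sup>* \<and> (i + k, i) \<in> (adj (pathE m))\<^sup>*"
proof (induction k)
  case (Suc k)
  then have "(i + k, Suc (i + k)) \<in> adj (pathE m)" "(Suc (i + k), i + k) \<in> adj (pathE m)"
    using path_edge_intro[of "i + k" m] by (auto simp: adj_def)
  then show ?case using Suc by (auto intro: rtrancl_into_rtrancl converse_rtrancl_into_rtrancl)
qed simp

lemma path_event_graph: "1 \<le> m \<Longrightarrow> event_graph (pathV m) (pathE m) (pathLab m)"
proof -
  assume m: "1 \<le> m"
  have "finite (pathV m)" "pathV m \<noteq> {}" by (auto simp: pathV_def)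
  moreover have "pathE m \<subseteq> {{u, v} | u v. u \<in> pathV m \<and> v \<in> pathV m \<and> u \<noteq> v}"
  proof
    fix e assume "e \<in> pathE m"
    then obtain i where "e = {i, Suc i}" "i < 2*m" by (auto simp: pathE_def)
    moreover have "i \<in> pathV m" "Suc i \<in> pathV m" "i \<noteq> Suc i" using \<open>i < 2*m\<close> by (auto simp: pathV_def)
    ultimately show "e \<in> {{u, v} | u v. u \<in> pathV m \<and> v \<in> pathV m \<and> u \<noteq> v}" by blast
  qed
  moreover have "\<forall>u\<in>pathV m. \<forall>v\<in>pathV m. (u, v) \<in> (adj (pathE m))\<^sup>*"
  proof (intro ballI)
    fix u v assume "u \<in> pathV m" "v \<in> pathV m"
    then have "u \<le> 2*m" "v \<le> 2*m" by (auto simp: pathV_def)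
    show "(u, v) \<in> (adj (pathE m))\<^sup>*"
    proof (cases "u \<le> v")
      case True then show ?thesis using path_connected[of "v - u" u m] \<open>v \<le> 2*m\<close> by simp
    next
      case False then show ?thesis using path_connected[of "u - v" v m] \<open>u \<le> 2*m\<close> by simp
    qed
  qed
  moreover have "\<forall>x\<in>univ (pathV m) (pathLab m). (\<exists>v\<in>pathV m. pathLab m v = (True, x)) \<and> (\<exists>v\<in>pathV m. pathLab m v = (False, x))"
  proof
    fix x assume "x \<in> univ (pathV m) (pathLab m)"
    then have x: "1 \<le> x" "x \<le> m" using path_univ[OF m] by auto
    have "m - x \<in> pathV m" "pathLab m (m - x) = (True, x)" using x by (auto simp: pathV_def pathLab_def)
    moreover have "m + x \<in> pathV m" "pathLab m (m + x) = (False, x)" using x by (auto simp: pathV_def pathLab_def)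
    ultimately show "(\<exists>v\<in>pathV m. pathLab m v = (True, x)) \<and> (\<exists>v\<in>pathV m. pathLab m v = (False, x))" by blast
  qed
  ultimately show ?thesis unfolding event_graph_def by blast
qed

abbreviation "pdec m \<equiv> dec_edges (pathV m) (pathE m) (pathLab m)"

lemma path_dec_edge:
  assumes "1 \<le> m" "p \<le> 2*m" "q \<le> 2*m" "{p, q} \<in> pathE m" "S \<subseteq> {1..m}"
  shows "((p, S), (q, step (pathLab m) q S)) \<in> pdec m"
proof -
  have "step (pathLab m) q S \<subseteq> {1..m}"
    using step_sub[of q "pathV m" S "pathLab m"] assms path_univ by (auto simp: pathV_def)
  then show ?thesis using assms path_univ by (auto simp: dec_edges_def dec_nodes_def pathV_def)
qed

text \<open>On the way back the
  walk only repeats operations whose effect is already present.\<close>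

lemma walk_right: "1 \<le> m \<Longrightarrow> j \<le> m \<Longrightarrow> S \<subseteq> {1..m} \<Longrightarrow> ((m, S), (m + j, S - {1..j})) \<in> (pdec m)\<^sup>*"
proof (induction j)
  case (Suc j)
  have "((m + j, S - {1..j}), (Suc (m + j), step (pathLab m) (Suc (m + j)) (S - {1..j}))) \<in> pdec m"
    using Suc.prems by (intro path_dec_edge path_edge_intro) auto
  moreover have "step (pathLab m) (Suc (m + j)) (S - {1..j}) = S - {1..Suc j}"
    by (auto simp: step_def lab_right)
  ultimately show ?case using Suc by (auto intro: rtrancl_into_rtrancl)
qed simp

lemma return_right: "1 \<le> m \<Longrightarrow> Suc k \<le> m \<Longrightarrow> T \<subseteq> {1..m} \<Longrightarrow> T \<inter> {1..Suc k} = {} \<Longrightarrow>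
   ((m + Suc k, T), (m + 1, T)) \<in> (pdec m)\<^sup>*"
proof (induction k)
  case (Suc k)
  have "((m + Suc (Suc k), T), (m + Suc k, step (pathLab m) (m + Suc k) T)) \<in> pdec m"
    using Suc.prems path_edge_intro(2)[of "m + Suc k" m] by (intro path_dec_edge) auto
  moreover have "step (pathLab m) (m + Suc k) T = T" using Suc.prems by (auto simp: step_def lab_right)
  moreover have "T \<inter> {1..Suc k} = {}" using Suc.prems by auto
  then have "((m + Suc k, T), (m + 1, T)) \<in> (pdec m)\<^sup>*" using Suc by simp
  ultimately show ?case by (metis converse_rtrancl_into_rtrancl)
qed simp

lemma right_excursion: "1 \<le> y \<Longrightarrow> y \<le> m \<Longrightarrow> S \<subseteq> {1..m} \<Longrightarrow> ((m, S), (m, S - {1..y} - {m})) \<in> (pdec m)\<^sup>*"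
proof -
  assume a: "1 \<le> y" "y \<le> m" "S \<subseteq> {1..m}"
  obtain k where k: "y = Suc k" using a by (cases y) auto
  have "((m, S), (m + y, S - {1..y})) \<in> (pdec m)\<^sup>*" using walk_right a by auto
  moreover have "((m + y, S - {1..y}), (m + 1, S - {1..y})) \<in> (pdec m)\<^sup>*"
    using return_right[of m k "S - {1..y}"] a k by auto
  moreover have "((m + 1, S - {1..y}), (m, step (pathLab m) m (S - {1..y}))) \<in> pdec m"
    using a path_edge_intro(2)[of m m] by (intro path_dec_edge) auto
  moreover have "step (pathLab m) m (S - {1..y}) = S - {1..y} - {m}" by (simp add: step_def lab_mid)
  ultimately show ?thesis by (metis rtrancl_trans rtrancl_into_rtrancl)
qed

lemma walk_left: "1 \<le> m \<Longrightarrow> j \<le> m \<Longrightarrow> S \<subseteq> {1..m} \<Longrightarrow> ((m, S), (m - j, S \<union> {1..j})) \<in> (pdec m)\<^sup>*"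
proof (induction j)
  case (Suc j)
  have "((m - j, S \<union> {1..j}), (m - Suc j, step (pathLab m) (m - Suc j) (S \<union> {1..j}))) \<in> pdec m"
    using Suc.prems path_edge_intro(2)[of "m - Suc j" m] by (intro path_dec_edge) (auto simp: Suc_diff_Suc)
  moreover have "step (pathLab m) (m - Suc j) (S \<union> {1..j}) = S \<union> {1..Suc j}"
    using Suc.prems by (auto simp: step_def lab_left)
  ultimately show ?case using Suc by (auto intro: rtrancl_into_rtrancl)
qed simp

lemma return_left: "1 \<le> m \<Longrightarrow> Suc k \<le> m \<Longrightarrow> T \<subseteq> {1..m} \<Longrightarrow> {1..Suc k} \<subseteq> T \<Longrightarrow>
   ((m - Suc k, T), (m - 1, T)) \<in> (pdec m)\<^sup>*"
proof (induction k)
  case (Suc k)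
  have "((m - Suc (Suc k), T), (m - Suc k, step (pathLab m) (m - Suc k) T)) \<in> pdec m"
    using Suc.prems path_edge_intro(1)[of "m - Suc (Suc k)" m] by (intro path_dec_edge) (auto simp: Suc_diff_Suc)
  moreover have "step (pathLab m) (m - Suc k) T = T" using Suc.prems by (auto simp: step_def lab_left)
  moreover have "{1..Suc k} \<subseteq> T" using Suc.prems by auto
  then have "((m - Suc k, T), (m - 1, T)) \<in> (pdec m)\<^sup>*" using Suc by simp
  ultimately show ?case by (metis converse_rtrancl_into_rtrancl)
qed simp

lemma left_excursion: "1 \<le> x \<Longrightarrow> x \<le> m \<Longrightarrow> S \<subseteq> {1..m} \<Longrightarrow> ((m, S), (m, (S \<union> {1..x}) - {m})) \<in> (pdec m)\<^sup>*"
proof -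
  assume a: "1 \<le> x" "x \<le> m" "S \<subseteq> {1..m}"
  obtain k where k: "x = Suc k" using a by (cases x) auto
  have "((m, S), (m - x, S \<union> {1..x})) \<in> (pdec m)\<^sup>*" using walk_left a by auto
  moreover have "((m - x, S \<union> {1..x}), (m - 1, S \<union> {1..x})) \<in> (pdec m)\<^sup>*"
    using return_left[of m k "S \<union> {1..x}"] a k by auto
  moreover have "((m - 1, S \<union> {1..x}), (m, step (pathLab m) m (S \<union> {1..x}))) \<in> pdec m"
    using a path_edge_intro(1)[of "m - 1" m] by (intro path_dec_edge) auto
  moreover have "step (pathLab m) m (S \<union> {1..x}) = (S \<union> {1..x}) - {m}" by (simp add: step_def lab_mid)
  ultimately show ?thesis by (metis rtrancl_trans rtrancl_into_rtrancl)
qed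

lemma pathY_eq: "pathY m = {y. odd y \<and> y < m}"
proof (rule set_eqI)
  fix y
  show "y \<in> pathY m \<longleftrightarrow> y \<in> {y. odd y \<and> y < m}"
  proof
    assume "y \<in> pathY m"
    then obtain k where "y = 2*k+1" "k < m div 2" by (auto simp: pathY_def)
    then show "y \<in> {y. odd y \<and> y < m}" by (simp; presburger)
  next
    assume "y \<in> {y. odd y \<and> y < m}"
    then obtain k where "y = 2*k+1" "y < m" by (auto elim!: oddE)
    then have "k < m div 2" by presburger
    then show "y \<in> pathY m" using \<open>y = 2*k+1\<close> by (auto simp: pathY_def)
  qed
qed

text \<open>Alternating
  excursions of decreasing lengths m - 1, m - 2, ..., 1 lead from (m, {}) through the nodes (m, Ystage m x)
  to (m, Y): this is the zig-zag that the lower bound shows to be unavoidable.\<close>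

definition Ystage :: "nat \<Rightarrow> nat \<Rightarrow> nat set" where
  "Ystage m x = {y. odd y \<and> x < y \<and> y < m} \<union> (if odd x then {1..x} else {})"

lemma Ystage_sub: "x < m \<Longrightarrow> Ystage m x \<subseteq> {1..m}"
  by (auto simp: Ystage_def)

lemma reach_Ystage: "2 \<le> m \<Longrightarrow> d \<le> m - 2 \<Longrightarrow> ((m, {}), (m, Ystage m (m - 1 - d))) \<in> (pdec m)\<^sup>*"
proof (induction d)
  case 0
  show ?case
  proof (cases "odd (m - 1)")
    case True
    have eq: "(({} \<union> {1..m - 1}) - {m}) = Ystage m (m - 1)" using True by (auto simp: Ystage_def)
    have "((m, {}), (m, ({} \<union> {1..m - 1}) - {m})) \<in> (pdec m)\<^sup>*" using 0 by (intro left_excursion) auto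
    then have "((m, {}), (m, Ystage m (m - 1))) \<in> (pdec m)\<^sup>*" by (simp only: eq)
    then show ?thesis by simp
  next
    case False
    have "Ystage m (m - 1) = {}" using False by (auto simp: Ystage_def)
    then show ?thesis by simp
  qed
next
  case (Suc d)
  let ?x = "m - 1 - d"
  have x2: "2 \<le> ?x" "?x < m" using Suc.prems by auto
  have IH: "((m, {}), (m, Ystage m ?x)) \<in> (pdec m)\<^sup>*" using Suc by auto
  have sub: "Ystage m ?x \<subseteq> {1..m}" using Ystage_sub x2 by blast
  have eqx: "m - 1 - Suc d = ?x - 1" by simp
  show ?case
  proof (cases "odd ?x")
    case True
    have "Ystage m ?x - {1..?x - 1} - {m} = Ystage m (?x - 1)"
      using True x2 unfolding Ystage_def by (auto; presburger)
    moreover have "((m, Ystage m ?x), (m, Ystage m ?x - {1..?x - 1} - {m})) \<in> (pdec m)\<^sup>*"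
      using right_excursion[of "?x - 1" m "Ystage m ?x"] x2 sub by auto
    ultimately show ?thesis using IH eqx by (metis rtrancl_trans)
  next
    case False
    have "(Ystage m ?x \<union> {1..?x - 1}) - {m} = Ystage m (?x - 1)"
      using False x2 unfolding Ystage_def by (auto; presburger)
    moreover have "((m, Ystage m ?x), (m, (Ystage m ?x \<union> {1..?x - 1}) - {m})) \<in> (pdec m)\<^sup>*"
      using left_excursion[of "?x - 1" m "Ystage m ?x"] x2 sub by auto
    ultimately show ?thesis using IH eqx by (metis rtrancl_trans)
  qed
qed

lemma Ystage_one: "2 \<le> m \<Longrightarrow> Ystage m 1 = pathY m"
  unfolding pathY_eq Ystage_def by (auto; presburger)

text \<open>Both (m, {}) and (m, Y) lie in the sink component: every node reaches (m, {}) by walking to m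
  and making a full right excursion, and (m, {}) reaches (m, Y).\<close>

lemma path_sink:
  assumes m: "2 \<le> m"
  shows "\<exists>C. is_sink_component (pathV m) (pathE m) (pathLab m) C \<and> (m, {}) \<in> C \<and> (m, pathY m) \<in> C"
proof -
  have eg: "event_graph (pathV m) (pathE m) (pathLab m)" using path_event_graph m by simp
  let ?C = "certified (pathV m) (pathE m) (pathLab m)"
  obtain u Z where uZ: "(u, Z) \<in> ?C" using certified_nonempty[OF eg] by auto
  then have "u \<in> pathV m" "Z \<subseteq> univ (pathV m) (pathLab m)" by (auto simp: certified_def dec_nodes_def)
  moreover have "m \<in> pathV m" by (simp add: pathV_def)
  ultimately obtain Z' where Z': "((u, Z), (m, Z')) \<in> (pdec m)\<^sup>*" "Z' \<subseteq> univ (pathV m) (pathLab m)"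
    using walk_to_node[OF eg] by blast
  have "Z' \<subseteq> {1..m}" using Z'(2) path_univ m by simp
  moreover have "((m, Z'), (m, Z' - {1..m} - {m})) \<in> (pdec m)\<^sup>*" using right_excursion[of m m Z'] m Z'(2) path_univ by simp
  ultimately have "((m, Z'), (m, {})) \<in> (pdec m)\<^sup>*"
    by (metis Diff_eq_empty_iff empty_Diff)
  then have empty: "(m, {}) \<in> ?C" using certified_closed[OF eg rtrancl_trans[OF Z'(1)] uZ] by blast
  have "((m, {}), (m, pathY m)) \<in> (pdec m)\<^sup>*"
    using reach_Ystage[of m "m - 2"] m Ystage_one[of m] by (simp add: numeral_2_eq_2)
  then have "(m, pathY m) \<in> ?C" using certified_closed[OF eg _ empty] by blast
  then show ?thesis using certified_is_sink[OF eg] empty by blast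
qed

section \<open>The lower bound\<close>

text \<open>Read a walk of P from its end backwards and record how far it has reached to the left (a)
  and to the right (b) of the middle node.  For the target Y the extents can only grow in a
  zig-zag pattern: a reaches an even value only after b did, and b an odd value only after a did.
  The admissible pairs are described by zigzag, and turn m s is the position of the s-th
  turning point: at distance (s + 1) div 2 from m, on the left iff s div 2 is even, i.e. in the
  order left 1, right 1, right 2, left 2, left 3, right 3, ...\<close>

definition zigzag :: "nat \<Rightarrow> nat \<Rightarrow> bool" where
  "zigzag a b \<longleftrightarrow> a = b \<or> (a = Suc b \<and> even b) \<or> (b = Suc a \<and> odd a)"

definition turn :: "nat \<Rightarrow> nat \<Rightarrow> int" where
  "turn m s = (if even (s div 2) then int m - int ((s + 1) div 2) else int m + int ((s + 1) div 2))"

text \<open>travel m s: the length of the zig-zag through the first s turning points.\<close>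

fun travel :: "nat \<Rightarrow> nat \<Rightarrow> int" where
  "travel m 0 = 0"
| "travel m (Suc s) = travel m s + \<bar>turn m (Suc s) - turn m s\<bar>"

lemma zigzag_left:
  assumes "zigzag a b" "even (Suc a) \<Longrightarrow> Suc a \<le> b"
  shows "zigzag (Suc a) b \<and> turn m (Suc a + b) = int m - int (Suc a)"
proof -
  have "a = b \<and> even a \<or> b = Suc a \<and> odd a" using assms unfolding zigzag_def by (cases "even a") auto
  then consider j where "a = 2 * j" "b = 2 * j" | j where "a = 2 * j + 1" "b = 2 * j + 2"
  proof (elim disjE conjE)
    assume "a = b" "even a"
    then show thesis using that(1) by (auto elim: evenE)
  next
    assume "b = Suc a" "odd a"
    then show thesis using that(2) by (auto elim: oddE)
  qed
  then show ?thesis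
  proof cases
    case 1
    then have "(Suc a + b) div 2 = 2 * j" "(Suc a + b + 1) div 2 = Suc a" by simp_all
    then show ?thesis using 1 by (simp add: zigzag_def turn_def)
  next
    case 2
    then have "(Suc a + b) div 2 = 2 * (j + 1)" "(Suc a + b + 1) div 2 = Suc a" by simp_all
    then show ?thesis using 2 by (simp add: zigzag_def turn_def)
  qed
qed

lemma zigzag_right:
  assumes "zigzag a b" "odd (Suc b) \<Longrightarrow> Suc b \<le> a"
  shows "zigzag a (Suc b) \<and> turn m (a + Suc b) = int m + int (Suc b)"
proof -
  have "a = b \<and> odd b \<or> a = Suc b \<and> even b" using assms unfolding zigzag_def by (cases "even b") auto
  then consider j where "a = 2 * j + 1" "b = 2 * j + 1" | j where "a = 2 * j + 1" "b = 2 * j"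
  proof (elim disjE conjE)
    assume "a = b" "odd b"
    then show thesis using that(1) by (auto elim: oddE)
  next
    assume "a = Suc b" "even b"
    then show thesis using that(2) by (auto elim: evenE)
  qed
  then show ?thesis
  proof cases
    case 1
    then have "(a + Suc b) div 2 = 2 * j + 1" "(a + Suc b + 1) div 2 = Suc b" by simp_all
    then show ?thesis using 1 by (simp add: zigzag_def turn_def)
  next
    case 2
    then have "(a + Suc b) div 2 = 2 * j + 1" "(a + Suc b + 1) div 2 = Suc b" by simp_all
    then show ?thesis using 2 by (simp add: zigzag_def turn_def)
  qed
qed

text \<open>Each crossing from one side to the other costs 2J + 2 steps, so travel grows quadratically.\<close>

lemma turn_gap: "\<bar>turn m (Suc (Suc (2*J))) - turn m (Suc (2*J))\<bar> = 2 * int J + 2"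
proof -
  have "Suc (Suc (2*J)) div 2 = Suc J" "Suc (2*J) div 2 = J"
    "(Suc (Suc (2*J)) + 1) div 2 = Suc J" "(Suc (2*J) + 1) div 2 = Suc J" by simp_all
  then show ?thesis by (cases "even J") (simp_all add: turn_def)
qed

lemma travel_mono: "s \<le> s' \<Longrightarrow> travel m s \<le> travel m s'"
  by (induction s' rule: dec_induct) auto

lemma travel_even: "int (J * (J + 1)) \<le> travel m (2 * J)"
proof (induction J)
  case (Suc J)
  have "travel m (2 * Suc J) = travel m (Suc (2*J)) + (2 * int J + 2)"
    using turn_gap[of m J] by simp
  moreover have "travel m (2 * J) \<le> travel m (Suc (2*J))" using travel_mono by simp
  ultimately show ?case using Suc by (simp add: algebra_simps)
qed simp

text \<open>The potential invariant: a walk with n nodes, currently at h, that has explored the pair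
  (a, b) must have paid for the zig-zag up to that pair and for the way back from its last
  turning point.\<close>

definition travel_ok :: "nat \<Rightarrow> nat \<Rightarrow> nat \<Rightarrow> nat \<Rightarrow> nat \<Rightarrow> bool" where
  "travel_ok m a b h n \<longleftrightarrow> zigzag a b \<and> 1 + travel m (a + b) + \<bar>int h - turn m (a + b)\<bar> \<le> int n"

lemma travel_ok_stay:
  "travel_ok m a b h n \<Longrightarrow> \<bar>int w - int h\<bar> = 1 \<Longrightarrow> travel_ok m a b w (Suc n)"
  unfolding travel_ok_def by arith

lemma travel_ok_left:
  assumes "travel_ok m a b h n" "\<bar>int w - int h\<bar> = 1" "even (Suc a) \<Longrightarrow> Suc a \<le> b"
    and "int w = int m - int (Suc a)"
  shows "travel_ok m (Suc a) b w (Suc n)"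
  using assms zigzag_left[of a b m] unfolding travel_ok_def by auto

lemma travel_ok_right:
  assumes "travel_ok m a b h n" "\<bar>int w - int h\<bar> = 1" "odd (Suc b) \<Longrightarrow> Suc b \<le> a"
    and "int w = int m + int (Suc b)"
  shows "travel_ok m a (Suc b) w (Suc n)"
  using assms zigzag_right[of a b m] unfolding travel_ok_def by auto

lemma travel_ok_length:
  assumes "travel_ok m a b h n" "K \<le> a"
  shows "(K - 1) * K + 1 \<le> n"
proof -
  have "a \<le> Suc b" using assms(1) unfolding travel_ok_def zigzag_def by auto
  then have "2 * (K - 1) \<le> a + b" using assms(2) by linarith
  moreover have "(K - 1) * (K - 1 + 1) = (K - 1) * K" by (cases K) auto
  ultimately have "int ((K - 1) * K) \<le> travel m (a + b)"
    using travel_even[of "K - 1" m] travel_mono by (metis order_trans)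
  then show ?thesis using assms(1) unfolding travel_ok_def by linarith
qed

fun left_reach :: "nat \<Rightarrow> nat list \<Rightarrow> nat" where
  "left_reach m [] = 0"
| "left_reach m (w # ws) = max (m - w) (left_reach m ws)"

fun right_reach :: "nat \<Rightarrow> nat list \<Rightarrow> nat" where
  "right_reach m [] = 0"
| "right_reach m (w # ws) = max (w - m) (right_reach m ws)"

lemma reach_mem: "p \<in> set ws \<Longrightarrow> m - p \<le> left_reach m ws \<and> p - m \<le> right_reach m ws"
  by (induction ws) auto

lemma path_agrees: "agrees (pathLab m) Y u \<longleftrightarrow> (u < m \<longleftrightarrow> elem (pathLab m) u \<in> Y)"
  by (auto simp: agrees_def pathLab_def)

lemma path_elem: "elem (pathLab m) u = (if u < m then m - u else if u = m then m else u - m)"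
  by (simp add: pathLab_def)

text \<open>Inserting an even element k < m (which is not in Y) must be
  undone later by the deletion node m + k; deleting an odd element k < m (which is in Y) must be
  undone later by the insertion node m - k.\<close>

lemma left_extension_forced:
  assumes s: "settled (agrees (pathLab m) (pathY m)) (elem (pathLab m)) (w # ws)"
    and w: "w < m" "0 < w" "even (m - w)"
  shows "\<exists>u\<in>set ws. u - m = m - w"
proof -
  have "m - w \<notin> pathY m" using w by (simp add: pathY_eq)
  then have "\<not> agrees (pathLab m) (pathY m) w" using w by (simp add: path_agrees path_elem)
  then obtain u where u: "u \<in> set ws" "elem (pathLab m) u = m - w" "agrees (pathLab m) (pathY m) u"
    using s w by (auto simp: path_elem)
  then have "m < u" using \<open>m - w \<notin> pathY m\<close> w by (auto simp: path_agrees path_elem split: if_splits)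
  then show ?thesis using u by (auto simp: path_elem)
qed

lemma right_extension_forced:
  assumes s: "settled (agrees (pathLab m) (pathY m)) (elem (pathLab m)) (w # ws)"
    and w: "m < w" "w - m < m" "odd (w - m)"
  shows "\<exists>u\<in>set ws. m - u = w - m"
proof -
  have "w - m \<in> pathY m" using w by (simp add: pathY_eq)
  then have "\<not> agrees (pathLab m) (pathY m) w" using w by (simp add: path_agrees path_elem)
  then obtain u where u: "u \<in> set ws" "elem (pathLab m) u = w - m" "agrees (pathLab m) (pathY m) u"
    using s w by (auto simp: path_elem)
  then have "u < m" using \<open>w - m \<in> pathY m\<close> w by (auto simp: path_agrees path_elem split: if_splits)
  then show ?thesis using u by (auto simp: path_elem)
qed

lemma extent_step_cases:
  fixes m w h a b :: nat
  assumes adj: "w = Suc h \<or> h = Suc w" and hb: "m - h \<le> a" "h - m \<le> b"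
  obtains (stay) "min (max (m - w) a) (m - 1) = min a (m - 1)" "min (max (w - m) b) (m - 1) = min b (m - 1)"
      | (left) "w < m" "m - w = Suc a" "a < m - 1" "w - m \<le> b"
      | (right) "m < w" "w - m = Suc b" "b < m - 1" "m - w \<le> a"
proof (cases "m - w \<le> a \<and> w - m \<le> b")
  case True
  then show ?thesis using stay by (simp add: max_absorb2)
next
  case False
  then consider "w < m" "m - w = Suc a" "w - m \<le> b" | "m < w" "w - m = Suc b" "m - w \<le> a"
    using adj hb by linarith
  then show ?thesis
  proof cases
    case 1
    then show ?thesis using stay left by (cases "a < m - 1") (simp_all add: min_def)
  next
    case 2
    then show ?thesis using stay right by (cases "b < m - 1") (simp_all add: min_def)
  qed
qed

text \<open>The potential argument: every walk of P that ends at m and is settled for Y (read backwards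
  from its end) satisfies the invariant travel_ok for its extents capped at m - 1.  Each new node is
  a neighbour of the previous one and either stays within the explored range or extends it by one,
  and extensions happen only in zig-zag order.\<close>

lemma travel_bound:
  assumes m: "2 \<le> m"
  shows "linked (pathE m) W \<Longrightarrow> W \<noteq> [] \<Longrightarrow> last W = m \<Longrightarrow>
    settled (agrees (pathLab m) (pathY m)) (elem (pathLab m)) W \<Longrightarrow>
    travel_ok m (min (left_reach m W) (m - 1)) (min (right_reach m W) (m - 1)) (hd W) (length W)"
proof (induction W)
  case (Cons w ws)
  show ?case
  proof (cases "ws = []")
    case True
    then show ?thesis using Cons.prems by (simp add: travel_ok_def zigzag_def turn_def)
  next
    case False
    define a b h where "a = left_reach m ws" and "b = right_reach m ws" and "h = hd ws"
    let ?M = "m - 1"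
    have edge: "{w, h} \<in> pathE m" and ws: "linked (pathE m) ws" using Cons.prems(1) False linked_Cons h_def by auto
    have IH: "travel_ok m (min a ?M) (min b ?M) h (length ws)"
      using Cons False ws unfolding a_def b_def h_def by simp
    have hb: "m - h \<le> a" "h - m \<le> b" using reach_mem[of h ws m] False by (auto simp: a_def b_def h_def)
    have adj: "w = Suc h \<or> h = Suc w" using path_edge[OF edge] by auto
    then have step: "\<bar>int w - int h\<bar> = 1" by auto
    have reach: "left_reach m (w # ws) = max (m - w) a" "right_reach m (w # ws) = max (w - m) b"
      by (simp_all add: a_def b_def)
    show ?thesis using adj hb
    proof (cases rule: extent_step_cases)
      case stay
      then show ?thesis using travel_ok_stay[OF IH step] reach by simp
    next
      case left
      have "Suc a \<le> min b ?M" if "even (Suc a)"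
        using left_extension_forced[OF Cons.prems(4)] left that reach_mem[of _ ws m] by (fastforce simp: b_def)
      then have "travel_ok m (Suc a) (min b ?M) w (Suc (length ws))"
        using travel_ok_left[OF _ step] IH left by simp
      moreover have "min (max (m - w) a) ?M = Suc a" "min (max (w - m) b) ?M = min b ?M" using left by auto
      ultimately show ?thesis by (simp only: reach list.sel(1) length_Cons)
    next
      case right
      have "Suc b \<le> min a ?M" if "odd (Suc b)"
        using right_extension_forced[OF Cons.prems(4)] right that reach_mem[of _ ws m] by (fastforce simp: a_def)
      then have "travel_ok m (min a ?M) (Suc b) w (Suc (length ws))"
        using travel_ok_right[OF _ step] IH right by simp
      moreover have "min (max (m - w) a) ?M = min a ?M" "min (max (w - m) b) ?M = Suc b" using right by auto
      ultimately show ?thesis by (simp only: reach list.sel(1) length_Cons)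
    qed
  qed
qed simp

lemma left_reach_of_member: "k \<in> fold (step (pathLab m)) W {} \<Longrightarrow> k \<le> left_reach m W"
proof -
  assume k: "k \<in> fold (step (pathLab m)) W {}"
  then have ex: "\<exists>w\<in>set W. elem (pathLab m) w = k" by (auto simp: fold_step_mem split: if_splits)
  define u where "u = last (filter (\<lambda>w. elem (pathLab m) w = k) W)"
  have "fst (pathLab m u)" using k ex by (simp add: fold_step_mem u_def)
  then have "u < m" by (simp add: pathLab_def split: if_splits)
  moreover have "u \<in> set W" "elem (pathLab m) u = k" using last_filter_in[OF ex] by (auto simp: u_def)
  ultimately show ?thesis using reach_mem[of u W m] by (simp add: lab_left)
qed

lemma square_bound:
  fixes K m :: nat
  assumes "1 \<le> K" "m \<le> K + 2"
  shows "(2*m+1)^2 \<le> 100 * (2 + (K - 1) * K)"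
proof -
  obtain j where j: "K = Suc j" using assms by (cases K) auto
  have "(2*m+1)^2 \<le> (2*K+5)^2" using assms by (intro power_mono) auto
  also have "\<dots> = 4*(j*j) + 28*j + 49" unfolding j by (simp add: power2_eq_square algebra_simps)
  also have "\<dots> \<le> 100 * (2 + j * Suc j)" by (simp add: algebra_simps)
  finally show ?thesis unfolding j by simp
qed

text \<open>Lower bound for directed walks of dec(P) from (m, {}) to (m, Y): project to a walk of P,
  which is settled for Y; it must insert the largest odd element K < m, so it reaches distance K
  to the left and the potential gives about K^2 nodes.\<close>

lemma path_dwalk_lower_bound:
  assumes m: "2 \<le> m" and L: "is_dwalk (pdec m) L" and hL: "hd L = (m, {})" and lL: "last L = (m, pathY m)"
  shows "(2*m+1)^2 \<le> 100 * length L"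
proof -
  define W where "W = tl (map fst L)"
  have L': "L \<noteq> []" "chained (pdec m) L" using L by (auto simp: is_dwalk_iff)
  have fY: "fold (step (pathLab m)) W {} = pathY m"
    using chained_project[OF L'(2)] L'(1) hL lL by (simp add: W_def)
  have "1 \<in> pathY m" using m by (simp add: pathY_eq)
  then have W: "W \<noteq> []" using fY by auto
  have "linked (pathE m) W" using chained_project[OF L'(2)] linked_tl W_def by blast
  moreover have "last W = m" using lL L'(1) W by (simp add: W_def last_map last_tl)
  moreover have "settled (agrees (pathLab m) (pathY m)) (elem (pathLab m)) W"
    using settled_fold[of "pathLab m" W "{}"] fY by simp
  ultimately have ok: "travel_ok m (min (left_reach m W) (m - 1)) (min (right_reach m W) (m - 1)) (hd W) (length W)"
    using travel_bound[OF m] W by blast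
  obtain K where K: "odd K" "1 \<le> K" "K < m" "m \<le> K + 2"
  proof (cases "odd (m - 1)")
    case True
    then show ?thesis using that[of "m - 1"] m by (auto elim: oddE)
  next
    case False
    then have "odd (m - 2)" using m by presburger
    then show ?thesis using that[of "m - 2"] m by (auto elim: oddE)
  qed
  then have "K \<le> left_reach m W" using left_reach_of_member fY by (simp add: pathY_eq)
  then have "(K - 1) * K + 1 \<le> length W" using travel_ok_length[OF ok] K(3) by simp
  moreover have "length L = Suc (length W)" using L'(1) by (simp add: W_def)
  ultimately have "2 + (K - 1) * K \<le> length L" by simp
  then show ?thesis using square_bound[OF K(2,4)] by (meson le_trans mult_le_mono2)
qed

text \<open>Lower bound for certifying walks for (m, Y): lifting one from {} gives such a directed walk.\<close>

lemma path_certifying_lower_bound: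
  assumes m: "2 \<le> m" and c: "certifying_walk (pathV m) (pathE m) (pathLab m) m (pathY m) W"
  shows "(2*m+1)^2 \<le> 100 * length W"
proof -
  note cw = certifying_walk_props[OF c]
  have univ: "univ (pathV m) (pathLab m) = {1..m}" using path_univ m by simp
  have "tl W \<noteq> []"
  proof
    assume "tl W = []"
    then have "W = [m]" using cw(1,4) by (cases W) auto
    moreover have "1 \<in> elem (pathLab m) ` set W" using cw(6) univ m by auto
    ultimately show False using m by (simp add: path_elem)
  qed
  moreover have "pathY m \<subseteq> univ (pathV m) (pathLab m)"
    unfolding univ pathY_eq using odd_pos by fastforce
  ultimately have f: "fold (step (pathLab m)) (tl W) {} = pathY m"
    using certifying_walk_fold_tl[OF c] by blast
  let ?L = "lift (pathLab m) {} W"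
  have "is_dwalk (pdec m) ?L"
    using lift_chained[OF cw(3,2)] lift_nonempty[OF cw(1)] by (simp add: is_dwalk_iff)
  moreover have "hd ?L = (m, {})" "last ?L = (m, pathY m)"
    using lift_hd[OF cw(1)] lift_last[OF cw(1)] cw(4,5) f by simp_all
  ultimately have "(2*m+1)^2 \<le> 100 * length ?L" using path_dwalk_lower_bound[OF m] by blast
  then show ?thesis by (simp add: lift_length)
qed

lemma certifying_walk_quadratic:
  "\<exists>c::real. c > 0 \<and>
      (\<forall>V E lab C v X. event_graph V E lab \<and> is_sink_component V E lab C \<and> (v, X) \<in> C \<longrightarrow>
         (\<exists>W. certifying_walk V E lab v X W \<and> real (length W) \<le> c * real (card V) ^ 2))"
proof (intro exI[of _ 2] conjI allI impI)
  fix V E lab C v X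
  assume "event_graph V E lab \<and> is_sink_component V E lab C \<and> (v, X) \<in> C"
  then obtain W where W: "certifying_walk V E lab v X W" "length W \<le> 2 * card V ^ 2"
    using sink_certifying_walk_bound by blast
  then have "real (length W) \<le> real (2 * card V ^ 2)" using of_nat_mono by blast
  then show "\<exists>W. certifying_walk V E lab v X W \<and> real (length W) \<le> 2 * real (card V) ^ 2"
    using W(1) by auto
qed simp

lemma sink_diameter_quadratic:
  "\<exists>c'::real. c' > 0 \<and>
      (\<forall>V E lab C a b. event_graph V E lab \<and> is_sink_component V E lab C \<and> a \<in> C \<and> b \<in> C \<longrightarrow>
         (\<exists>W. is_dwalk (dec_edges V E lab) W \<and> set W \<subseteq> C \<and> hd W = a \<and> last W = b \<and>
              real (length W) \<le> c' * real (card V) ^ 2))"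
proof (intro exI[of _ 3] conjI allI impI)
  fix V E lab C a b
  assume "event_graph V E lab \<and> is_sink_component V E lab C \<and> a \<in> C \<and> b \<in> C"
  then obtain W where W: "is_dwalk (dec_edges V E lab) W" "set W \<subseteq> C" "hd W = a" "last W = b"
    "length W \<le> 3 * card V ^ 2"
    using sink_diameter_bound by blast
  then have "real (length W) \<le> real (3 * card V ^ 2)" using of_nat_mono by blast
  then show "\<exists>W. is_dwalk (dec_edges V E lab) W \<and> set W \<subseteq> C \<and> hd W = a \<and> last W = b \<and>
      real (length W) \<le> 3 * real (card V) ^ 2"
    using W by auto
qed simp

lemma path_example_tight:
  "\<exists>c::real. c > 0 \<and>
      (\<forall>m::nat. m \<ge> 2 \<longrightarrow>
         event_graph (pathV m) (pathE m) (pathLab m) \<and>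
         (\<exists>C. is_sink_component (pathV m) (pathE m) (pathLab m) C \<and>
              (m, {}) \<in> C \<and> (m, pathY m) \<in> C) \<and>
         (\<forall>W. certifying_walk (pathV m) (pathE m) (pathLab m) m (pathY m) W \<longrightarrow>
              real (length W) \<ge> c * real (2*m+1) ^ 2) \<and>
         (\<forall>W. is_dwalk (dec_edges (pathV m) (pathE m) (pathLab m)) W \<and>
              hd W = (m, {}) \<and> last W = (m, pathY m) \<longrightarrow>
              real (length W) \<ge> c * real (2*m+1) ^ 2))"
proof (intro exI[of _ "1/100"] conjI allI impI)
  fix m :: nat assume m: "2 \<le> m"
  have real_bound: "1/100 * real (2*m+1) ^ 2 \<le> real n" if "(2*m+1)^2 \<le> 100 * n" for n
  proof -
    have "real ((2*m+1)^2) \<le> real (100 * n)" using that of_nat_mono by blast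
    then show ?thesis by simp
  qed
  show "event_graph (pathV m) (pathE m) (pathLab m)" using path_event_graph m by simp
  show "\<exists>C. is_sink_component (pathV m) (pathE m) (pathLab m) C \<and> (m, {}) \<in> C \<and> (m, pathY m) \<in> C"
    using path_sink[OF m] .
  show "real (length W) \<ge> 1/100 * real (2*m+1) ^ 2"
    if "certifying_walk (pathV m) (pathE m) (pathLab m) m (pathY m) W" for W
    using real_bound path_certifying_lower_bound[OF m that] by blast
  show "real (length W) \<ge> 1/100 * real (2*m+1) ^ 2"
    if "is_dwalk (pdec m) W \<and> hd W = (m, {}) \<and> last W = (m, pathY m)" for W
    using real_bound path_dwalk_lower_bound[OF m] that by blast
qed simp

theorem mainTheorem5:
  shows
  "(\<exists>c::real. c > 0 \<and>
      (\<forall>V E lab C v X. event_graph V E lab \<and> is_sink_component V E lab C \<and> (v, X) \<in> C \<longrightarrow>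
         (\<exists>W. certifying_walk V E lab v X W \<and> real (length W) \<le> c * real (card V) ^ 2)))
   \<and> (\<exists>c'::real. c' > 0 \<and>
      (\<forall>V E lab C a b. event_graph V E lab \<and> is_sink_component V E lab C \<and> a \<in> C \<and> b \<in> C \<longrightarrow>
         (\<exists>W. is_dwalk (dec_edges V E lab) W \<and> set W \<subseteq> C \<and> hd W = a \<and> last W = b \<and>
              real (length W) \<le> c' * real (card V) ^ 2)))
   \<and> (\<exists>c::real. c > 0 \<and>
      (\<forall>m::nat. m \<ge> 2 \<longrightarrow>
         event_graph (pathV m) (pathE m) (pathLab m) \<and>
         (\<exists>C. is_sink_component (pathV m) (pathE m) (pathLab m) C \<and>
              (m, {}) \<in> C \<and> (m, pathY m) \<in> C) \<and>
         (\<forall>W. certifying_walk (pathV m) (pathE m) (pathLab m) m (pathY m) W \<longrightarrow>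
              real (length W) \<ge> c * real (2*m+1) ^ 2) \<and>
         (\<forall>W. is_dwalk (dec_edges (pathV m) (pathE m) (pathLab m)) W \<and>
              hd W = (m, {}) \<and> last W = (m, pathY m) \<longrightarrow>
              real (length W) \<ge> c * real (2*m+1) ^ 2)))"
  using certifying_walk_quadratic sink_diameter_quadratic path_example_tight by (intro conjI)

end
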